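(* Let $\mathcal{A}$ be a primal algebra with universe $A$, let $<$ be a linear order on $A$, and let $\sqsubset$ denote the induced antilexicographic orders. Let $n,m$ be positive integers, $\pi$ a permutation of $\{1,\dots,n\}$ and $\sigma$ a permutation of $\{1,\dots,m\}$. A map $f:A^n\to A^m$ is a homomorphism from $\mathcal{A}^n_{\sqsubseteq_\pi}$ to $\mathcal{A}^m_{\sqsubseteq_\sigma}$ if and only if there exist $i_1,\dots,i_m\in\{1,\dots,n\}$ such that $f(x_1,\dots,x_n)=(x_{i_1},\dots,x_{i_m})$ for all $x_1,\dots,x_n\in A$ and the numbers $j_s=\pi^{-1}(i_{\sigma(s)})$, $s\in\{1,\dots,m\}$, satisfy: (i) $j_m=n$; and (ii) for every $s<m$, if $j_s=k<n$ then $\{k+1,\dots,n\}\subseteq\{j_{s+1},\dots,j_m\}$.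
   Context: A primal algebra is a finite algebra with at least two elements in which every finitary operation on its universe is a term operation. For a linear order $<$ on $A$ and a positive integer $n$, the antilexicographic order $\sqsubset$ on $A^n$ is: $(x_1,\dots,x_n)\sqsubset(y_1,\dots,y_n)$ iff there is $s$ with $x_t=y_t$ for all $t>s$ and $x_s<y_s$. For a permutation $\pi$ of $\{1,\dots,n\}$, $(x_1,\dots,x_n)\sqsubset_\pi(y_1,\dots,y_n)$ iff $(x_{\pi(1)},\dots,x_{\pi(n)})\sqsubset(y_{\pi(1)},\dots,y_{\pi(n)})$; $\sqsubseteq$ and $\sqsubseteq_\pi$ are the reflexive versions. $\mathcal{A}^n_{\sqsubseteq_\pi}$ is the direct power algebra $\mathcal{A}^n$ expanded by the relation $\sqsubseteq_\pi$. A homomorphism from $\mathcal{A}^n_{\sqsubseteq_\pi}$ to $\mathcal{A}^m_{\sqsubseteq_\sigma}$ is a map $A^n\to A^m$ that is an algebra homomorphism $\mathcal{A}^n\to\mathcal{A}^m$ and satisfies $\bar x\sqsubseteq_\pi\bar y\Rightarrow f(\bar x)\sqsubseteq_\sigma f(\bar y)$. *)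

theory Defs
  imports "HOL-Library.FuncSet" "HOL-Combinatorics.Permutations"
begin

definition is_algebra :: "'a set \<Rightarrow> (nat \<times> ('a list \<Rightarrow> 'a)) set \<Rightarrow> bool" where
  "is_algebra A ops \<longleftrightarrow> A \<noteq> {} \<and>
     (\<forall>(k, g) \<in> ops. \<forall>xs. length xs = k \<and> set xs \<subseteq> A \<longrightarrow> g xs \<in> A)"

inductive_set term_ops :: "(nat \<times> ('a list \<Rightarrow> 'a)) set \<Rightarrow> nat \<Rightarrow> ('a list \<Rightarrow> 'a) set"
  for ops :: "(nat \<times> ('a list \<Rightarrow> 'a)) set" and n :: nat where
  proj: "i < n \<Longrightarrow> (\<lambda>xs. xs ! i) \<in> term_ops ops n"
| app: "(k, g) \<in> ops \<Longrightarrow> length ts = k \<Longrightarrow> (\<forall>t \<in> set ts. t \<in> term_ops ops n)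
        \<Longrightarrow> (\<lambda>xs. g (map (\<lambda>t. t xs) ts)) \<in> term_ops ops n"

definition primal :: "'a set \<Rightarrow> (nat \<times> ('a list \<Rightarrow> 'a)) set \<Rightarrow> bool" where
  "primal A ops \<longleftrightarrow> is_algebra A ops \<and> finite A \<and> card A \<ge> 2 \<and>
     (\<forall>n \<ge> 1. \<forall>h. (\<forall>xs. length xs = n \<and> set xs \<subseteq> A \<longrightarrow> h xs \<in> A) \<longrightarrow>
        (\<exists>t \<in> term_ops ops n. \<forall>xs. length xs = n \<and> set xs \<subseteq> A \<longrightarrow> t xs = h xs))"

abbreviation tuples :: "'a set \<Rightarrow> nat \<Rightarrow> (nat \<Rightarrow> 'a) set" where
  "tuples A n \<equiv> PiE {1..n} (\<lambda>_. A)"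

definition power_op :: "nat \<Rightarrow> ('a list \<Rightarrow> 'a) \<Rightarrow> (nat \<Rightarrow> 'a) list \<Rightarrow> (nat \<Rightarrow> 'a)" where
  "power_op n g xs = (\<lambda>t \<in> {1..n}. g (map (\<lambda>x. x t) xs))"

definition antilex_less :: "'a rel \<Rightarrow> nat \<Rightarrow> (nat \<Rightarrow> 'a) \<Rightarrow> (nat \<Rightarrow> 'a) \<Rightarrow> bool" where
  "antilex_less r n x y \<longleftrightarrow>
     (\<exists>s \<in> {1..n}. (\<forall>t \<in> {s<..n}. x t = y t) \<and> (x s, y s) \<in> r)"

definition antilex_less_perm :: "'a rel \<Rightarrow> nat \<Rightarrow> (nat \<Rightarrow> nat) \<Rightarrow> (nat \<Rightarrow> 'a) \<Rightarrow> (nat \<Rightarrow> 'a) \<Rightarrow> bool" where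
  "antilex_less_perm r n \<pi> x y \<longleftrightarrow> antilex_less r n (x \<circ> \<pi>) (y \<circ> \<pi>)"

definition antilex_le_perm :: "'a rel \<Rightarrow> nat \<Rightarrow> (nat \<Rightarrow> nat) \<Rightarrow> (nat \<Rightarrow> 'a) \<Rightarrow> (nat \<Rightarrow> 'a) \<Rightarrow> bool" where
  "antilex_le_perm r n \<pi> x y \<longleftrightarrow> x = y \<or> antilex_less_perm r n \<pi> x y"

definition is_hom ::
  "'a set \<Rightarrow> (nat \<times> ('a list \<Rightarrow> 'a)) set \<Rightarrow> 'a rel \<Rightarrow> nat \<Rightarrow> (nat \<Rightarrow> nat) \<Rightarrow> nat \<Rightarrow> (nat \<Rightarrow> nat)
     \<Rightarrow> ((nat \<Rightarrow> 'a) \<Rightarrow> (nat \<Rightarrow> 'a)) \<Rightarrow> bool" where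
  "is_hom A ops r n \<pi> m \<sigma> f \<longleftrightarrow>
     (\<forall>x \<in> tuples A n. f x \<in> tuples A m) \<and>
     (\<forall>(k, g) \<in> ops. \<forall>xs. length xs = k \<and> set xs \<subseteq> tuples A n \<longrightarrow>
         f (power_op n g xs) = power_op m g (map f xs)) \<and>
     (\<forall>x \<in> tuples A n. \<forall>y \<in> tuples A n.
         antilex_le_perm r n \<pi> x y \<longrightarrow> antilex_le_perm r m \<sigma> (f x) (f y))"

end

theory Submission
  imports Defs
begin

(*
  In a primal algebra every operation on A is a term operation, so an algebra homomorphism
  f : A^n -> A^m commutes with all operations on A. If coordinate s of f were not a
  projection, pick tuples X 1, ..., X n with f (X i) s ~= X i i. The operation that is e1
  at the list (f (X 1) s, ..., f (X n) s) and e0 elsewhere is then constantly e0 on the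
  coordinate lists of X 1, ..., X n, yet applying it after f gives e1 at coordinate s.
  Hence f x = (x (i 1), ..., x (i m)).

  Composing with the permutations reduces the order condition to monotonicity of the
  reindexing u |-> u o j for the plain antilexicographic orders, where j = inv pi o i o sigma.
  This holds iff every index above j s occurs among j (s + 1), ..., j m. If so, the last
  position where u o j and v o j differ carries the highest index where u and v differ. If
  an index p > j s is missing, tuples over a < b differing exactly at j s and at p are
  ordered one way, but the other way after reindexing.
*)

definition closed_op :: "'a set \<Rightarrow> nat \<Rightarrow> ('a list \<Rightarrow> 'a) \<Rightarrow> bool" where
  "closed_op A k g \<longleftrightarrow> (\<forall>xs. length xs = k \<and> set xs \<subseteq> A \<longrightarrow> g xs \<in> A)"

definition power_hom ::
  "'a set \<Rightarrow> (nat \<times> ('a list \<Rightarrow> 'a)) set \<Rightarrow> nat \<Rightarrow> nat \<Rightarrow> ((nat \<Rightarrow> 'a) \<Rightarrow> (nat \<Rightarrow> 'a)) \<Rightarrow> bool" where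
  "power_hom A ops n m f \<longleftrightarrow>
     (\<forall>x\<in>tuples A n. f x \<in> tuples A m) \<and>
     (\<forall>(k, g)\<in>ops. \<forall>xs. length xs = k \<and> set xs \<subseteq> tuples A n \<longrightarrow>
         f (power_op n g xs) = power_op m g (map f xs))"

lemma is_hom_iff_power_hom:
  "is_hom A ops r n \<pi> m \<sigma> f \<longleftrightarrow> power_hom A ops n m f \<and>
     (\<forall>x\<in>tuples A n. \<forall>y\<in>tuples A n.
         antilex_le_perm r n \<pi> x y \<longrightarrow> antilex_le_perm r m \<sigma> (f x) (f y))"
  unfolding is_hom_def power_hom_def by (simp only: conj_assoc)

lemma term_op_closed:
  assumes alg: "is_algebra A ops" and t: "t \<in> term_ops ops k"
  shows "closed_op A k t"
proof -
  have "t ys \<in> A" if "length ys = k" "set ys \<subseteq> A" for ys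
    using t
  proof (induction t rule: term_ops.induct)
    case (proj i)
    then show ?case using that by auto
  next
    case (app l g ts)
    have "set (map (\<lambda>t. t ys) ts) \<subseteq> A" using app by auto
    then show ?case using alg app unfolding is_algebra_def by fastforce
  qed
  then show ?thesis unfolding closed_op_def by blast
qed

lemma power_op_closed:
  assumes "closed_op A k g" "length xs = k" "set xs \<subseteq> tuples A n"
  shows "power_op n g xs \<in> tuples A n"
proof -
  have "set (map (\<lambda>x. x t) xs) \<subseteq> A" if "t \<in> {1..n}" for t
    using assms(3) that by (auto simp: PiE_iff)
  then show ?thesis using assms(1,2) unfolding closed_op_def power_op_def by auto
qed

lemma power_op_cong:
  assumes "\<forall>ys. length ys = k \<and> set ys \<subseteq> A \<longrightarrow> g ys = h ys"
    and "length xs = k" "set xs \<subseteq> tuples A n"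
  shows "power_op n g xs = power_op n h xs"
proof -
  have "set (map (\<lambda>x. x t) xs) \<subseteq> A" if "t \<in> {1..n}" for t
    using assms(3) that by (auto simp: PiE_iff)
  then show ?thesis using assms(1,2) unfolding power_op_def by (auto intro!: ext)
qed

lemma power_hom_term_op:
  assumes alg: "is_algebra A ops" and f: "power_hom A ops n m f"
  shows "t \<in> term_ops ops k \<Longrightarrow> length xs = k \<Longrightarrow> set xs \<subseteq> tuples A n
         \<Longrightarrow> f (power_op n t xs) = power_op m t (map f xs)"
proof (induction t rule: term_ops.induct)
  case (proj i)
  then have xi: "xs ! i \<in> tuples A n" by (metis nth_mem subsetD)
  then have fxi: "f (xs ! i) \<in> tuples A m" using f unfolding power_hom_def by blast
  have "power_op n (\<lambda>xs. xs ! i) xs = xs ! i"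
    using xi proj unfolding power_op_def by (auto simp: PiE_iff extensional_def)
  moreover have "power_op m (\<lambda>xs. xs ! i) (map f xs) = f (xs ! i)"
    using fxi proj unfolding power_op_def by (auto simp: PiE_iff extensional_def)
  ultimately show ?case by simp
next
  case (app l g ts)
  define ys where "ys = map (\<lambda>t. power_op n t xs) ts"
  have ys_len: "length ys = l" unfolding ys_def using app(2) by simp
  have ys: "set ys \<subseteq> tuples A n"
  proof
    fix y assume "y \<in> set ys"
    then obtain t where t: "t \<in> set ts" "y = power_op n t xs" unfolding ys_def by auto
    then have "t \<in> term_ops ops k" using app(3) by blast
    then show "y \<in> tuples A n"
      using t(2) app(4,5) power_op_closed term_op_closed[OF alg] by blast
  qed
  have "power_op n (\<lambda>xs. g (map (\<lambda>t. t xs) ts)) xs = power_op n g ys"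
    unfolding ys_def power_op_def by (auto simp: comp_def)
  then have "f (power_op n (\<lambda>xs. g (map (\<lambda>t. t xs) ts)) xs) = f (power_op n g ys)" by simp
  also have "\<dots> = power_op m g (map f ys)"
    using f app(1) ys_len ys unfolding power_hom_def by blast
  also have "map f ys = map (\<lambda>t. power_op m t (map f xs)) ts"
    unfolding ys_def using app(3,4,5) by simp
  also have "power_op m g \<dots> = power_op m (\<lambda>xs. g (map (\<lambda>t. t xs) ts)) (map f xs)"
    unfolding power_op_def by (auto simp: comp_def)
  finally show ?case .
qed

lemma primal_power_hom_commutes:
  assumes pr: "primal A ops" and f: "power_hom A ops n m f"
    and h: "k \<ge> 1" "closed_op A k h" and xs: "length xs = k" "set xs \<subseteq> tuples A n"
  shows "f (power_op n h xs) = power_op m h (map f xs)"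
proof -
  obtain t where t: "t \<in> term_ops ops k" "\<forall>ys. length ys = k \<and> set ys \<subseteq> A \<longrightarrow> t ys = h ys"
    using pr h unfolding primal_def closed_op_def by blast
  have "\<forall>x\<in>tuples A n. f x \<in> tuples A m" using f unfolding power_hom_def by blast
  then have "set (map f xs) \<subseteq> tuples A m" using xs(2) by (simp only: set_map) blast
  then have "power_op m t (map f xs) = power_op m h (map f xs)"
    using power_op_cong[OF t(2)] xs(1) by simp
  moreover have "power_op n h xs = power_op n t xs"
    using power_op_cong[OF t(2) xs] by simp
  moreover have "is_algebra A ops" using pr unfolding primal_def by blast
  ultimately show ?thesis using power_hom_term_op[OF _ f t(1) xs] by simp
qed

lemma primal_two_elements:
  assumes "primal A ops"
  obtains a b where "a \<in> A" "b \<in> A" "a \<noteq> b"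
proof -
  have "finite A" "\<not> card A \<le> Suc 0" using assms unfolding primal_def by auto
  then show ?thesis using card_le_Suc0_iff_eq that by blast
qed

lemma primal_power_hom_coordinate:
  assumes pr: "primal A ops" and f: "power_hom A ops n m f"
    and n: "n \<ge> 1" and s: "s \<in> {1..m}"
  shows "\<exists>i\<in>{1..n}. \<forall>x\<in>tuples A n. f x s = x i"
proof (rule ccontr)
  assume "\<not> ?thesis"
  then have "\<forall>i\<in>{1..n}. \<exists>x. x \<in> tuples A n \<and> f x s \<noteq> x i" by blast
  then obtain X where X: "\<forall>i\<in>{1..n}. X i \<in> tuples A n \<and> f (X i) s \<noteq> X i i"
    by (rule bchoice[THEN exE])
  obtain e0 e1 where e: "e0 \<in> A" "e1 \<in> A" "e0 \<noteq> e1"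
    using primal_two_elements[OF pr] by blast
  define xs where "xs = map X [1..<Suc n]"
  have set_xs: "set xs = X ` {1..n}"
    unfolding xs_def by (simp only: set_map set_upt atLeastLessThanSuc_atLeastAtMost)
  then have xs: "length xs = n" "set xs \<subseteq> tuples A n"
    using X unfolding xs_def by simp_all blast
  define b where "b = map (\<lambda>x. f x s) xs"
  define g where "g ys = (if ys = b then e1 else e0)" for ys
  have g: "closed_op A n g" "closed_op A n (\<lambda>_. e0)" using e unfolding g_def closed_op_def by auto
  have cols: "map (\<lambda>x. x i) xs \<noteq> b" if i: "i \<in> {1..n}" for i
  proof
    assume "map (\<lambda>x. x i) xs = b"
    then have "\<forall>x\<in>set xs. x i = f x s" unfolding b_def by simp
    moreover have "X i \<in> set xs" using i unfolding set_xs by blast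
    ultimately have "X i i = f (X i) s" by (rule bspec)
    then show False using bspec[OF X i] by simp
  qed
  have "power_op n g xs = power_op n (\<lambda>_. e0) xs"
    unfolding power_op_def g_def using cols by (intro restrict_ext) simp
  then have "power_op m g (map f xs) = power_op m (\<lambda>_. e0) (map f xs)"
    using primal_power_hom_commutes[OF pr f n g(1) xs] primal_power_hom_commutes[OF pr f n g(2) xs]
    by simp
  then have "power_op m g (map f xs) s = power_op m (\<lambda>_. e0) (map f xs) s" by simp
  then show False using s e unfolding power_op_def g_def b_def by (simp add: comp_def)
qed

lemma projection_power_hom:
  assumes alg: "is_algebra A ops" and i: "\<forall>s\<in>{1..m}. i s \<in> {1..n}"
    and f: "\<forall>x\<in>tuples A n. f x = (\<lambda>s\<in>{1..m}. x (i s))"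
  shows "power_hom A ops n m f"
proof -
  have "f (power_op n g xs) = power_op m g (map f xs)"
    if "(k, g) \<in> ops" "length xs = k" "set xs \<subseteq> tuples A n" for k g xs
  proof -
    have "closed_op A k g" using alg that(1) unfolding is_algebra_def closed_op_def by blast
    then have "power_op n g xs \<in> tuples A n" using power_op_closed that(2,3) by blast
    moreover have cols: "map ((\<lambda>x. x s) \<circ> f) xs = map (\<lambda>x. x (i s)) xs" if "s \<in> {1..m}" for s
      using that f \<open>set xs \<subseteq> tuples A n\<close> by auto
    ultimately show ?thesis
      using f i unfolding power_op_def by (auto simp: cols intro!: ext)
  qed
  moreover have "f x \<in> tuples A m" if "x \<in> tuples A n" for x
    using that f i by (auto simp: PiE_iff)
  ultimately show ?thesis unfolding power_hom_def by blast
qed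

lemma primal_power_hom_iff_projection:
  assumes pr: "primal A ops" and n: "n \<ge> 1"
  shows "power_hom A ops n m f \<longleftrightarrow>
    (\<exists>i. (\<forall>s\<in>{1..m}. i s \<in> {1..n}) \<and> (\<forall>x\<in>tuples A n. f x = (\<lambda>s\<in>{1..m}. x (i s))))"
proof
  assume f: "power_hom A ops n m f"
  obtain i where i: "\<forall>s\<in>{1..m}. i s \<in> {1..n} \<and> (\<forall>x\<in>tuples A n. f x s = x (i s))"
    using primal_power_hom_coordinate[OF pr f n] by metis
  have "f x = (\<lambda>s\<in>{1..m}. x (i s))" if "x \<in> tuples A n" for x
    using that i f unfolding power_hom_def by (auto simp: PiE_iff extensional_def)
  with i show "\<exists>i. (\<forall>s\<in>{1..m}. i s \<in> {1..n}) \<and> (\<forall>x\<in>tuples A n. f x = (\<lambda>s\<in>{1..m}. x (i s)))"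
    by blast
next
  assume "\<exists>i. (\<forall>s\<in>{1..m}. i s \<in> {1..n}) \<and> (\<forall>x\<in>tuples A n. f x = (\<lambda>s\<in>{1..m}. x (i s)))"
  then show "power_hom A ops n m f"
    using projection_power_hom pr unfolding primal_def by blast
qed

(* Equality is only required on {1..n}, so that, unlike antilex_le_perm, this depends on the
   coordinates alone. *)
definition antilex_le :: "'a rel \<Rightarrow> nat \<Rightarrow> (nat \<Rightarrow> 'a) \<Rightarrow> (nat \<Rightarrow> 'a) \<Rightarrow> bool" where
  "antilex_le r n u v \<longleftrightarrow> (\<forall>t\<in>{1..n}. u t = v t) \<or> antilex_less r n u v"

(* For s = m the clause says that no index exceeds j m, i.e. j m = n. *)
definition upper_indices_later :: "nat \<Rightarrow> nat \<Rightarrow> (nat \<Rightarrow> nat) \<Rightarrow> bool" where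
  "upper_indices_later n m j \<longleftrightarrow> (\<forall>s\<in>{1..m}. {j s<..n} \<subseteq> j ` {s<..m})"

lemma antilex_less_cong:
  assumes "\<forall>t\<in>{1..n}. u t = u' t" "\<forall>t\<in>{1..n}. v t = v' t"
  shows "antilex_less r n u v \<longleftrightarrow> antilex_less r n u' v'"
  unfolding antilex_less_def using assms by (intro bex_cong) auto

lemma antilex_le_cong:
  assumes "\<forall>t\<in>{1..n}. u t = u' t" "\<forall>t\<in>{1..n}. v t = v' t"
  shows "antilex_le r n u v \<longleftrightarrow> antilex_le r n u' v'"
  unfolding antilex_le_def using antilex_less_cong[OF assms] assms by auto

lemma antilex_le_reindex:
  assumes irr: "irrefl r" and j: "j ` {1..m} \<subseteq> {1..n}" and later: "upper_indices_later n m j"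
    and le: "antilex_le r n u v"
  shows "antilex_le r m (u \<circ> j) (v \<circ> j)"
proof (cases "\<forall>s\<in>{1..m}. u (j s) = v (j s)")
  case True
  then show ?thesis unfolding antilex_le_def by simp
next
  case False
  define S where "S = {s\<in>{1..m}. u (j s) \<noteq> v (j s)}"
  define s0 where "s0 = Max S"
  have "finite S" "S \<noteq> {}" using False unfolding S_def by auto
  then have s0: "s0 \<in> S" and s0_max: "\<And>s. s \<in> S \<Longrightarrow> s \<le> s0"
    unfolding s0_def by auto
  have above_s0: "u (j s) = v (j s)" if "s \<in> {s0<..m}" for s
    using that s0 s0_max[of s] unfolding S_def by force
  have js0: "j s0 \<in> {1..n}" "u (j s0) \<noteq> v (j s0)" using s0 j unfolding S_def by blast+
  then obtain p where p: "p \<in> {1..n}" "\<forall>t\<in>{p<..n}. u t = v t" "(u p, v p) \<in> r"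
    using le unfolding antilex_le_def antilex_less_def by blast
  have "j s0 \<le> p"
    using js0 p(2) by (meson atLeastAtMost_iff greaterThanAtMost_iff not_le)
  moreover have "\<not> j s0 < p"
  proof
    assume "j s0 < p"
    then obtain s where "s \<in> {s0<..m}" "p = j s"
      using later s0 p(1) unfolding upper_indices_later_def S_def by fastforce
    then show False using above_s0 p(3) irr unfolding irrefl_def by auto
  qed
  ultimately have "j s0 = p" by simp
  then have "antilex_less r m (u \<circ> j) (v \<circ> j)"
    unfolding antilex_less_def using s0 p(3) above_s0 unfolding S_def by (intro bexI[of _ s0]) auto
  then show ?thesis unfolding antilex_le_def by simp
qed

lemma antilex_le_strict_above:
  assumes le: "antilex_le r m x y" and s: "s \<in> {1..m}" "x s \<noteq> y s" "(x s, y s) \<notin> r"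
  shows "\<exists>s'\<in>{s<..m}. (x s', y s') \<in> r"
proof -
  obtain p where p: "p \<in> {1..m}" "\<forall>t\<in>{p<..m}. x t = y t" "(x p, y p) \<in> r"
    using le s unfolding antilex_le_def antilex_less_def by blast
  have "s < p"
    using p s by (metis greaterThanAtMost_iff atLeastAtMost_iff linorder_neqE_nat)
  then show ?thesis using p by auto
qed

lemma reindex_mono_upper_indices_later:
  assumes irr: "irrefl r" and tr: "trans r" and ab: "a \<in> A" "b \<in> A" "(a, b) \<in> r"
    and j: "j ` {1..m} \<subseteq> {1..n}"
    and mono: "\<And>u v. u \<in> tuples A n \<Longrightarrow> v \<in> tuples A n \<Longrightarrow>
                 antilex_le r n u v \<Longrightarrow> antilex_le r m (u \<circ> j) (v \<circ> j)"
  shows "upper_indices_later n m j"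
  unfolding upper_indices_later_def
proof (intro ballI subsetI)
  fix s p assume s: "s \<in> {1..m}" and p: "p \<in> {j s<..n}"
  have ba: "(b, a) \<notin> r" and "a \<noteq> b"
    using irr tr ab unfolding irrefl_def trans_def by blast+
  define u where "u = (\<lambda>t\<in>{1..n}. if t = j s then b else a)"
  define v where "v = (\<lambda>t\<in>{1..n}. if t = p then b else a)"
  have uv: "u \<in> tuples A n" "v \<in> tuples A n" using ab unfolding u_def v_def by auto
  have "j s \<in> {1..n}" using s j by blast
  then have "antilex_less r n u v"
    using p ab(3) unfolding antilex_less_def u_def v_def by (intro bexI[of _ p]) auto
  then have "antilex_le r m (u \<circ> j) (v \<circ> j)" using mono uv unfolding antilex_le_def by blast
  moreover have "(u \<circ> j) s = b" "(v \<circ> j) s = a"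
    using p \<open>j s \<in> {1..n}\<close> unfolding u_def v_def by auto
  ultimately obtain s' where s': "s' \<in> {s<..m}" "(u (j s'), v (j s')) \<in> r"
    using antilex_le_strict_above[of r m "u \<circ> j" "v \<circ> j" s] s ba \<open>a \<noteq> b\<close> by auto
  have "(u t, v t) \<notin> r" if "t \<noteq> p" for t
    using that ba irr unfolding u_def v_def irrefl_def by auto
  then have "j s' = p" using s' by blast
  then show "p \<in> j ` {s<..m}" using s' by blast
qed

lemma reindex_mono_iff_upper_indices_later:
  assumes slo: "strict_linear_order_on A r" and ab: "a \<in> A" "b \<in> A" "a \<noteq> b"
    and j: "j ` {1..m} \<subseteq> {1..n}"
  shows "(\<forall>u\<in>tuples A n. \<forall>v\<in>tuples A n. antilex_le r n u v \<longrightarrow> antilex_le r m (u \<circ> j) (v \<circ> j))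
    \<longleftrightarrow> upper_indices_later n m j"
proof -
  have irr: "irrefl r" and tr: "trans r" and tot: "total_on A r"
    using slo unfolding strict_linear_order_on_def by auto
  obtain a' b' where "a' \<in> A" "b' \<in> A" "(a', b') \<in> r"
    using tot ab unfolding total_on_def by blast
  note mono_later = reindex_mono_upper_indices_later[OF irr tr this j]
  show ?thesis
    using mono_later antilex_le_reindex[OF irr j] by (intro iffI ballI impI) blast+
qed

lemma upper_indices_later_iff:
  assumes j: "j ` {1..m} \<subseteq> {1..n}" and m: "m \<ge> 1"
  shows "upper_indices_later n m j \<longleftrightarrow>
    j m = n \<and> (\<forall>s\<in>{1..<m}. j s < n \<longrightarrow> {j s + 1..n} \<subseteq> j ` {s + 1..m})"
proof -
  have "j m \<le> n" using j m by force
  then have "{j m<..n} \<subseteq> j ` {m<..m} \<longleftrightarrow> j m = n" by auto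
  moreover have "{j s<..n} \<subseteq> j ` {s<..m} \<longleftrightarrow> (j s < n \<longrightarrow> {j s + 1..n} \<subseteq> j ` {s + 1..m})" for s
    by (cases "j s < n") (simp_all add: atLeastSucAtMost_greaterThanAtMost)
  moreover have "{1..m} = insert m {1..<m}" using m by auto
  ultimately show ?thesis unfolding upper_indices_later_def by simp
qed

lemma tuples_eq_iff_permuted:
  assumes g: "g permutes {1..n}" and x: "x \<in> tuples A n" and y: "y \<in> tuples A n"
  shows "x = y \<longleftrightarrow> (\<forall>t\<in>{1..n}. x (g t) = y (g t))"
proof -
  have "x = y \<longleftrightarrow> (\<forall>t\<in>{1..n}. x t = y t)"
    using x y by (metis PiE_ext)
  also have "\<dots> \<longleftrightarrow> (\<forall>t\<in>{1..n}. x (g t) = y (g t))"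
    using permutes_image[OF g] by (metis (no_types) image_iff)
  finally show ?thesis .
qed

lemma antilex_le_perm_iff:
  assumes "g permutes {1..n}" "x \<in> tuples A n" "y \<in> tuples A n"
  shows "antilex_le_perm r n g x y \<longleftrightarrow> antilex_le r n (x \<circ> g) (y \<circ> g)"
  unfolding antilex_le_perm_def antilex_less_perm_def antilex_le_def
  using tuples_eq_iff_permuted[OF assms] by simp

lemma permute_tuples_image:
  assumes g: "g permutes {1..n}"
  shows "(\<lambda>x. restrict (x \<circ> g) {1..n}) ` tuples A n = tuples A n"
proof
  show "(\<lambda>x. restrict (x \<circ> g) {1..n}) ` tuples A n \<subseteq> tuples A n"
    using permutes_in_image[OF g] by auto
  show "tuples A n \<subseteq> (\<lambda>x. restrict (x \<circ> g) {1..n}) ` tuples A n"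
  proof
    fix u assume u: "u \<in> tuples A n"
    have "restrict (u \<circ> inv g) {1..n} \<in> tuples A n"
      using u permutes_in_image[OF permutes_inv[OF g]] by auto
    moreover have "u = restrict (restrict (u \<circ> inv g) {1..n} \<circ> g) {1..n}"
      using u permutes_in_image[OF g] permutes_inverses(2)[OF g] by (auto simp: PiE_iff extensional_def)
    ultimately show "u \<in> (\<lambda>x. restrict (x \<circ> g) {1..n}) ` tuples A n" by blast
  qed
qed

lemma permuted_index_range:
  assumes "\<pi> permutes {1..n}" "\<sigma> permutes {1..m}" "\<forall>s\<in>{1..m}. i s \<in> {1..n}"
  shows "(inv \<pi> \<circ> i \<circ> \<sigma>) ` {1..m} \<subseteq> {1..n}"
  using assms permutes_in_image[OF assms(2)] permutes_in_image[OF permutes_inv[OF assms(1)]] by auto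

lemma projection_antilex_perm_mono_iff_reindex:
  assumes \<pi>: "\<pi> permutes {1..n}" and \<sigma>: "\<sigma> permutes {1..m}"
    and i: "\<forall>s\<in>{1..m}. i s \<in> {1..n}"
    and f: "\<forall>x\<in>tuples A n. f x = (\<lambda>s\<in>{1..m}. x (i s))"
  shows "(\<forall>x\<in>tuples A n. \<forall>y\<in>tuples A n.
            antilex_le_perm r n \<pi> x y \<longrightarrow> antilex_le_perm r m \<sigma> (f x) (f y))
    \<longleftrightarrow> (\<forall>u\<in>tuples A n. \<forall>v\<in>tuples A n.
            antilex_le r n u v \<longrightarrow> antilex_le r m (u \<circ> (inv \<pi> \<circ> i \<circ> \<sigma>)) (v \<circ> (inv \<pi> \<circ> i \<circ> \<sigma>)))"
proof -
  define j where "j = inv \<pi> \<circ> i \<circ> \<sigma>"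
  define p where "p x = restrict (x \<circ> \<pi>) {1..n}" for x :: "nat \<Rightarrow> 'a"
  have j_range: "j s \<in> {1..n}" if "s \<in> {1..m}" for s
    using that permuted_index_range[OF \<pi> \<sigma> i] unfolding j_def by blast
  have fx: "f x \<in> tuples A m" and f_perm: "\<forall>s\<in>{1..m}. (f x \<circ> \<sigma>) s = (p x \<circ> j) s"
    if "x \<in> tuples A n" for x
    using that i f j_range permutes_in_image[OF \<sigma>] permutes_inverses(1)[OF \<pi>]
    unfolding p_def j_def by (auto simp: PiE_iff)
  have p_perm: "\<forall>t\<in>{1..n}. (x \<circ> \<pi>) t = p x t" for x
    unfolding p_def by simp
  have "(antilex_le_perm r n \<pi> x y \<longrightarrow> antilex_le_perm r m \<sigma> (f x) (f y)) \<longleftrightarrow>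
      (antilex_le r n (p x) (p y) \<longrightarrow> antilex_le r m (p x \<circ> j) (p y \<circ> j))"
    if "x \<in> tuples A n" "y \<in> tuples A n" for x y
    using antilex_le_perm_iff[OF \<pi> that] antilex_le_perm_iff[OF \<sigma> fx[OF that(1)] fx[OF that(2)]]
      antilex_le_cong[OF p_perm p_perm] antilex_le_cong[OF f_perm[OF that(1)] f_perm[OF that(2)]]
    by (simp add: o_def)
  then have "(\<forall>x\<in>tuples A n. \<forall>y\<in>tuples A n.
            antilex_le_perm r n \<pi> x y \<longrightarrow> antilex_le_perm r m \<sigma> (f x) (f y))
    \<longleftrightarrow> (\<forall>u\<in>p ` tuples A n. \<forall>v\<in>p ` tuples A n.
            antilex_le r n u v \<longrightarrow> antilex_le r m (u \<circ> j) (v \<circ> j))"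
    by simp
  also have "p ` tuples A n = tuples A n"
    unfolding p_def using permute_tuples_image[OF \<pi>] .
  finally show ?thesis unfolding j_def .
qed

lemma projection_antilex_perm_mono_iff:
  assumes slo: "strict_linear_order_on A r" and ab: "a \<in> A" "b \<in> A" "a \<noteq> b" and m: "m \<ge> 1"
    and \<pi>: "\<pi> permutes {1..n}" and \<sigma>: "\<sigma> permutes {1..m}"
    and i: "\<forall>s\<in>{1..m}. i s \<in> {1..n}"
    and f: "\<forall>x\<in>tuples A n. f x = (\<lambda>s\<in>{1..m}. x (i s))"
  shows "(\<forall>x\<in>tuples A n. \<forall>y\<in>tuples A n.
            antilex_le_perm r n \<pi> x y \<longrightarrow> antilex_le_perm r m \<sigma> (f x) (f y))
    \<longleftrightarrow> (let j = (\<lambda>s. inv \<pi> (i (\<sigma> s))) in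
          j m = n \<and> (\<forall>s \<in> {1..<m}. j s < n \<longrightarrow> {j s + 1..n} \<subseteq> j ` {s + 1..m}))"
proof -
  note j = permuted_index_range[OF \<pi> \<sigma> i]
  show ?thesis
    unfolding projection_antilex_perm_mono_iff_reindex[OF \<pi> \<sigma> i f]
      reindex_mono_iff_upper_indices_later[OF slo ab j] upper_indices_later_iff[OF j m]
    by (simp add: Let_def o_def)
qed

theorem lemma4p1:
  fixes A :: "'a set" and ops :: "(nat \<times> ('a list \<Rightarrow> 'a)) set" and r :: "'a rel"
    and n m :: nat and \<pi> \<sigma> :: "nat \<Rightarrow> nat" and f :: "(nat \<Rightarrow> 'a) \<Rightarrow> (nat \<Rightarrow> 'a)"
  assumes "primal A ops"
    and "strict_linear_order_on A r"
    and "n \<ge> 1" and "m \<ge> 1"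
    and "\<pi> permutes {1..n}" and "\<sigma> permutes {1..m}"
  shows "is_hom A ops r n \<pi> m \<sigma> f \<longleftrightarrow>
    (\<exists>i :: nat \<Rightarrow> nat. (\<forall>s \<in> {1..m}. i s \<in> {1..n}) \<and>
       (\<forall>x \<in> tuples A n. f x = (\<lambda>s \<in> {1..m}. x (i s))) \<and>
       (let j = (\<lambda>s. inv \<pi> (i (\<sigma> s))) in
          j m = n \<and>
          (\<forall>s \<in> {1..<m}. j s < n \<longrightarrow> {j s + 1..n} \<subseteq> j ` {s + 1..m})))"
proof -
  obtain a b where "a \<in> A" "b \<in> A" "a \<noteq> b"
    using primal_two_elements[OF assms(1)] by blast
  note order_iff = projection_antilex_perm_mono_iff[OF assms(2) this assms(4-6)]
  show ?thesis
    unfolding is_hom_iff_power_hom primal_power_hom_iff_projection[OF assms(1,3)]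
    using order_iff by blast
qed

end
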